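(* Let $\kappa$ be a Mahlo cardinal, or more generally a strongly inaccessible cardinal such that $S^\kappa_{\mathrm{pr}}$ is stationary in $\kappa$. Then $\mathfrak b_\kappa\le\mathrm{cf}(\mathbf{nst}^{\mathrm{pr}}_\kappa)$.
   Context: For a cardinal $\lambda$, $S^\lambda_{\mathrm{inc}}$ is the set of strongly inaccessible cardinals below $\lambda$. A set $S\subseteq\lambda$ is nowhere stationary if for every $\delta\le\lambda$ of uncountable cofinality, $S\cap\delta$ is nonstationary in $\delta$. By induction on strongly inaccessible $\lambda$ one defines a forcing $\mathbb Q_\lambda$ and an ideal $\mathrm{id}(\mathbb Q_\lambda)$ on $2^\lambda$: $p\in\mathbb Q_\lambda$ iff $p\subseteq 2^{<\lambda}$ is closed under initial segments and there is a witness $(\tau,S,\langle N_\delta:\delta\in S\rangle)$ with: (i) $\tau$ is the trunk of $p$, the least node of $p$ having two immediate successors in $p$; (ii) if $\tau\trianglelefteq\eta\in p$ then $\eta^\frown0,\eta^\frown1\in p$; (iii) $S\subseteq S^\lambda_{\mathrm{inc}}$ is nowhere stationary; (iv) $N_\delta\in\mathrm{id}(\mathbb Q_\delta)$ for $\delta\in S$; (v) for limit $\delta<\lambda$ with $\delta\notin S$ and $\eta\in2^\delta$: $\eta\in p$ iff $\eta\restriction\sigma\in p$ for all $\sigma<\delta$; (vi) for $\delta\in S$ and $\eta\in 2^\delta$: $\eta\in p$ iff $\eta\restriction\sigma\in p$ for all $\sigma<\delta$ and $\eta\notin N_\delta$. The order is $q\le p$ iff $q\subseteq p$. $[p]$ is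 the set of $x\in 2^\lambda$ all of whose proper initial segments lie in $p$; for $\mathcal J\subseteq\mathbb Q_\lambda$, $\mathrm{set}_0(\mathcal J)=2^\lambda\setminus\bigcup_{p\in\mathcal J}[p]$. $A\in\mathrm{id}(\mathbb Q_\lambda)$ iff there are at most $\lambda$ predense sets $\mathcal J_i\subseteq\mathbb Q_\lambda$ with $A\subseteq\bigcup_i\mathrm{set}_0(\mathcal J_i)$. $\Pr(\lambda)$ means: there is a family $\{\Lambda_i:i<\lambda\}$ of maximal antichains of $\mathbb Q_\lambda$ such that no $p\in\mathbb Q_\lambda$ satisfies $[p]\subseteq\bigcap_{i<\lambda}\bigcup_{q\in\Lambda_i}[q]$; $S^\kappa_{\mathrm{pr}}=\{\lambda\in S^\kappa_{\mathrm{inc}}:\Pr(\lambda)\}$. $\mathbf{nst}^{\mathrm{pr}}_\kappa$ is the family of nowhere stationary subsets of $S^\kappa_{\mathrm{pr}}$, ordered by $\subseteq^*$ (inclusion modulo a bounded subset of $\kappa$); $\mathrm{cf}(\mathbf{nst}^{\mathrm{pr}}_\kappa)$ is the least size of a subfamily $\mathcal C$ such that every member of $\mathbf{nst}^{\mathrm{pr}}_\kappa$ is $\subseteq^*$ some member of $\mathcal C$. $\mathfrak b_\kappa$ is the least size of a family $B\subseteq\kappa^\kappa$ with no $\le^*$-upper bound in $\kappa^\kappa$, where $f\le^*g$ means $f(i)\le g(i)$ for all but boundedly many $i<\kappa$. *)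

theory Defs
  imports Main "HOL-Library.Countable_Set" "HOL-Library.FuncSet"
begin

(* Ordinals are elements of a well-ordered type 'a; the ordinal d is identified
   with the set below d of its predecessors. *)

type_synonym 'a node = "'a \<times> ('a \<Rightarrow> bool)"

definition below :: "'a::wellorder \<Rightarrow> 'a set" where
  "below d = {x. x < d}"

definition is_limit :: "'a::wellorder \<Rightarrow> bool" where
  "is_limit d \<longleftrightarrow> (\<exists>x. x < d) \<and> (\<forall>b<d. \<exists>x. b < x \<and> x < d)"

definition cofinal_in :: "'a::wellorder set \<Rightarrow> 'a \<Rightarrow> bool" where
  "cofinal_in C d \<longleftrightarrow> C \<subseteq> below d \<and> (\<forall>b<d. \<exists>c\<in>C. b \<le> c)"

definition uncountable_cf :: "'a::wellorder \<Rightarrow> bool" where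
  "uncountable_cf d \<longleftrightarrow> \<not> (\<exists>C. cofinal_in C d \<and> countable C)"

definition club :: "'a::wellorder set \<Rightarrow> 'a \<Rightarrow> bool" where
  "club C d \<longleftrightarrow> C \<subseteq> below d \<and> (\<forall>b<d. \<exists>c\<in>C. b \<le> c) \<and>
     (\<forall>g<d. is_limit g \<and> (\<forall>b<g. \<exists>c\<in>C. b < c \<and> c < g) \<longrightarrow> g \<in> C)"

definition stationary_in :: "'a::wellorder set \<Rightarrow> 'a \<Rightarrow> bool" where
  "stationary_in S d \<longleftrightarrow> (\<forall>C. club C d \<longrightarrow> S \<inter> C \<noteq> {})"

definition nowhere_stationary :: "'a::wellorder \<Rightarrow> 'a set \<Rightarrow> bool" where
  "nowhere_stationary l S \<longleftrightarrow>
     (\<forall>d. d \<le> l \<and> uncountable_cf d \<longrightarrow> \<not> stationary_in (S \<inter> below d) d)"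

definition is_cardinal :: "'a::wellorder \<Rightarrow> bool" where
  "is_cardinal l \<longleftrightarrow> (\<forall>m<l. (card_of (below m), card_of (below l)) \<in> ordLess)"

definition regular :: "'a::wellorder \<Rightarrow> bool" where
  "regular l \<longleftrightarrow> (\<forall>C. cofinal_in C l \<longrightarrow> (card_of C, card_of (below l)) \<in> ordIso)"

definition strong_limit :: "'a::wellorder \<Rightarrow> bool" where
  "strong_limit l \<longleftrightarrow> (\<forall>m<l. (card_of (Pow (below m)), card_of (below l)) \<in> ordLess)"

definition strongly_inaccessible :: "'a::wellorder \<Rightarrow> bool" where
  "strongly_inaccessible l \<longleftrightarrow>
     \<not> countable (below l) \<and> is_cardinal l \<and> regular l \<and> strong_limit l"

definition S_inc :: "'a::wellorder \<Rightarrow> 'a set" where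
  "S_inc l = {x. x < l \<and> strongly_inaccessible x}"

(* 2^d : a node (d, f) with f vanishing from d on *)
definition seqs :: "'a::wellorder \<Rightarrow> 'a node set" where
  "seqs d = {(d, f) | f. \<forall>x. d \<le> x \<longrightarrow> \<not> f x}"

definition tree_lt :: "'a::wellorder \<Rightarrow> 'a node set" where
  "tree_lt l = (\<Union>d\<in>below l. seqs d)"

definition restr :: "'a::wellorder node \<Rightarrow> 'a \<Rightarrow> 'a node" where
  "restr eta s = (s, \<lambda>x. x < s \<and> snd eta x)"

definition init_seg :: "'a::wellorder node \<Rightarrow> 'a node \<Rightarrow> bool" where
  "init_seg nu eta \<longleftrightarrow> fst nu \<le> fst eta \<and> nu = restr eta (fst nu)"

definition succ_ord :: "'a::wellorder \<Rightarrow> 'a" where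
  "succ_ord d = (LEAST x. d < x)"

definition extend :: "'a::wellorder node \<Rightarrow> bool \<Rightarrow> 'a node" where
  "extend eta b = (succ_ord (fst eta), (snd eta)(fst eta := b))"

definition is_trunk :: "'a::wellorder node set \<Rightarrow> 'a node \<Rightarrow> bool" where
  "is_trunk p tau \<longleftrightarrow> tau \<in> p \<and> extend tau False \<in> p \<and> extend tau True \<in> p \<and>
     (\<forall>nu\<in>p. extend nu False \<in> p \<and> extend nu True \<in> p \<longrightarrow> init_seg tau nu)"

(* Q_l, given the ideals Id d = id(Q_d) for d < l *)
definition Qset :: "('a::wellorder \<Rightarrow> 'a node set set) \<Rightarrow> 'a \<Rightarrow> 'a node set set" where
  "Qset Idl l = {p. p \<subseteq> tree_lt l \<and> (\<forall>eta\<in>p. \<forall>nu. init_seg nu eta \<longrightarrow> nu \<in> p) \<and>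
     (\<exists>tau S N.
        is_trunk p tau \<and>
        (\<forall>eta\<in>p. init_seg tau eta \<longrightarrow> extend eta False \<in> p \<and> extend eta True \<in> p) \<and>
        S \<subseteq> S_inc l \<and> nowhere_stationary l S \<and>
        (\<forall>d\<in>S. N d \<in> Idl d) \<and>
        (\<forall>d. d < l \<and> is_limit d \<and> d \<notin> S \<longrightarrow>
            (\<forall>eta\<in>seqs d. eta \<in> p \<longleftrightarrow> (\<forall>s<d. restr eta s \<in> p))) \<and>
        (\<forall>d\<in>S. \<forall>eta\<in>seqs d. eta \<in> p \<longleftrightarrow> (\<forall>s<d. restr eta s \<in> p) \<and> eta \<notin> N d))}"

definition branches :: "'a::wellorder \<Rightarrow> 'a node set \<Rightarrow> 'a node set" where
  "branches l p = {x \<in> seqs l. \<forall>s<l. restr x s \<in> p}"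

definition compatible :: "'b set set \<Rightarrow> 'b set \<Rightarrow> 'b set \<Rightarrow> bool" where
  "compatible Q p q \<longleftrightarrow> (\<exists>r\<in>Q. r \<subseteq> p \<and> r \<subseteq> q)"

definition predense :: "'b set set \<Rightarrow> 'b set set \<Rightarrow> bool" where
  "predense Q J \<longleftrightarrow> J \<subseteq> Q \<and> (\<forall>p\<in>Q. \<exists>q\<in>J. compatible Q p q)"

definition max_antichain :: "'b set set \<Rightarrow> 'b set set \<Rightarrow> bool" where
  "max_antichain Q A \<longleftrightarrow> predense Q A \<and> (\<forall>p\<in>A. \<forall>q\<in>A. p \<noteq> q \<longrightarrow> \<not> compatible Q p q)"

definition set0 :: "'a::wellorder \<Rightarrow> 'a node set set \<Rightarrow> 'a node set" where
  "set0 l J = seqs l - (\<Union>q\<in>J. branches l q)"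

definition idset :: "'a::wellorder node set set \<Rightarrow> 'a \<Rightarrow> 'a node set set" where
  "idset Q l = {A. A \<subseteq> seqs l \<and>
     (\<exists>JJ. (card_of JJ, card_of (below l)) \<in> ordLeq \<and> (\<forall>J\<in>JJ. predense Q J) \<and>
           A \<subseteq> (\<Union>J\<in>JJ. set0 l J))}"

definition idQ :: "'a::wellorder \<Rightarrow> 'a node set set" where
  "idQ = wfrec {(x, y). x < y} (\<lambda>H l. idset (Qset H l) l)"

definition QQ :: "'a::wellorder \<Rightarrow> 'a node set set" where
  "QQ l = Qset idQ l"

definition Pr :: "'a::wellorder \<Rightarrow> bool" where
  "Pr l \<longleftrightarrow> (\<exists>Lam. (\<forall>i<l. max_antichain (QQ l) (Lam i)) \<and>
     \<not> (\<exists>p\<in>QQ l. branches l p \<subseteq> (\<Inter>i\<in>below l. \<Union>q\<in>Lam i. branches l q)))"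

definition S_pr :: "'a::wellorder \<Rightarrow> 'a set" where
  "S_pr k = {l \<in> S_inc k. Pr l}"

definition subseteq_star :: "'a::wellorder \<Rightarrow> 'a set \<Rightarrow> 'a set \<Rightarrow> bool" where
  "subseteq_star k A B \<longleftrightarrow> (\<exists>b<k. A - B \<subseteq> below b)"

definition nst_pr :: "'a::wellorder \<Rightarrow> 'a set set" where
  "nst_pr k = {S. S \<subseteq> S_pr k \<and> nowhere_stationary k S}"

definition cofinal_family :: "'a::wellorder \<Rightarrow> 'a set set \<Rightarrow> bool" where
  "cofinal_family k C \<longleftrightarrow> C \<subseteq> nst_pr k \<and> (\<forall>S\<in>nst_pr k. \<exists>T\<in>C. subseteq_star k S T)"

definition kfuns :: "'a::wellorder \<Rightarrow> ('a \<Rightarrow> 'a) set" where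
  "kfuns k = below k \<rightarrow>\<^sub>E below k"

definition le_star :: "'a::wellorder \<Rightarrow> ('a \<Rightarrow> 'a) \<Rightarrow> ('a \<Rightarrow> 'a) \<Rightarrow> bool" where
  "le_star k f g \<longleftrightarrow> (\<exists>b<k. \<forall>i. b \<le> i \<and> i < k \<longrightarrow> f i \<le> g i)"

definition unbounded_family :: "'a::wellorder \<Rightarrow> ('a \<Rightarrow> 'a) set \<Rightarrow> bool" where
  "unbounded_family k B \<longleftrightarrow> B \<subseteq> kfuns k \<and> \<not> (\<exists>g\<in>kfuns k. \<forall>f\<in>B. le_star k f g)"

end

theory Submission
  imports Defs
begin

text \<open>
  Let \<open>C\<close> be a cofinal family in \<open>nst\<^sup>p\<^sup>r\<^sub>\<kappa>\<close>. Each \<open>T \<in> C\<close> is nonstationary in \<open>\<kappa>\<close>,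
  so it misses a club \<open>D\<^sub>T\<close>; let \<open>f\<^sub>T(i)\<close> be the least element of \<open>D\<^sub>T\<close> above \<open>i\<close>.
  If some \<open>g\<close> eventually dominated every \<open>f\<^sub>T\<close>, consider the set \<open>A\<close> of \<open>\<lambda> \<in> S\<^sup>\<kappa>\<^sub>p\<^sub>r\<close>
  closed under \<open>g\<close>. It is stationary, and its isolated points form a nowhere
  stationary set, hence are almost contained in some \<open>T \<in> C\<close>. A large enough
  isolated point \<open>a\<close> of \<open>A\<close> then lies in \<open>T\<close>, so \<open>a \<notin> D\<^sub>T\<close>, and as \<open>a\<close> is a limit,
  \<open>D\<^sub>T\<close> is bounded below \<open>a\<close>: for \<open>i\<close> just below \<open>a\<close> we get
  \<open>g(i) < a \<le> f\<^sub>T(i) \<le> g(i)\<close>. Hence \<open>{f\<^sub>T | T \<in> C}\<close> is unbounded.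
\<close>

lemma uncountable_cf_if_regular:
  fixes l :: "'a::wellorder"
  assumes "\<not> countable (below l)" and "regular l"
  shows "uncountable_cf l"
  unfolding uncountable_cf_def
proof
  assume "\<exists>C. cofinal_in C l \<and> countable C"
  then obtain C where C: "cofinal_in C l" "countable C" by blast
  then have "(card_of C, card_of (below l)) \<in> ordIso"
    using assms(2) unfolding regular_def by blast
  then obtain f where "bij_betw f C (below l)" using card_of_ordIso by blast
  then have "below l = f ` C" by (simp add: bij_betw_def)
  with C(2) assms(1) show False by simp
qed

lemma strongly_inaccessibleD:
  fixes k :: "'a::wellorder"
  assumes "strongly_inaccessible k"
  shows "is_cardinal k" "regular k" "uncountable_cf k"
  using assms uncountable_cf_if_regular unfolding strongly_inaccessible_def by auto

lemma uncountable_cf_between: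
  fixes d :: "'a::wellorder"
  assumes "uncountable_cf d" and "b < d"
  shows "\<exists>x. b < x \<and> x < d"
proof (rule ccontr)
  assume "\<not> ?thesis"
  then have "cofinal_in {b} d"
    using assms(2) unfolding cofinal_in_def below_def by (auto simp: not_less)
  then show False using assms(1) unfolding uncountable_cf_def by blast
qed

lemma strongly_inaccessible_is_limit:
  fixes a :: "'a::wellorder"
  assumes "strongly_inaccessible a" and "b < a"
  shows "is_limit a"
  using assms uncountable_cf_between[OF strongly_inaccessibleD(3)[OF assms(1)]]
  unfolding is_limit_def by blast

lemma iterate_sup_below:
  fixes d :: "'a::wellorder"
  assumes "uncountable_cf d" and F: "\<forall>b<d. b < F b \<and> F b < d" and "c < d"
  shows "\<exists>\<gamma><d. c < \<gamma> \<and> (\<forall>b<\<gamma>. \<exists>n. b < (F^^n) c) \<and> (\<forall>n. (F^^n) c < \<gamma>)"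
proof -
  define s where "s n = (F^^n) c" for n
  have s_below: "s n < d" for n by (induction n) (use assms in \<open>auto simp: s_def\<close>)
  have s_increasing: "s n < s (Suc n)" for n using s_below[of n] F by (simp add: s_def)
  have "\<not> cofinal_in (range s) d" using assms(1) unfolding uncountable_cf_def by blast
  moreover have "range s \<subseteq> below d" using s_below by (auto simp: below_def)
  ultimately obtain b where b: "b < d" "\<forall>n. s n < b"
    unfolding cofinal_in_def by (auto simp: not_le)
  define \<gamma> where "\<gamma> = (LEAST y. \<forall>n. s n < y)"
  have s_below_\<gamma>: "\<forall>n. s n < \<gamma>" unfolding \<gamma>_def by (rule LeastI[of _ b]) (use b in auto)
  have "\<gamma> \<le> b" unfolding \<gamma>_def by (rule Least_le) (use b in auto)
  have s_cofinal: "\<exists>n. x < s n" if "x < \<gamma>" for x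
  proof (rule ccontr)
    assume "\<not> ?thesis"
    then have "\<forall>n. s n < x" using s_increasing by (meson leD leI order.strict_trans1)
    then have "\<gamma> \<le> x" unfolding \<gamma>_def by (rule Least_le)
    with that show False by simp
  qed
  have "c < \<gamma>" using s_below_\<gamma> by (metis funpow_0 s_def)
  with s_below_\<gamma> s_cofinal \<open>\<gamma> \<le> b\<close> b(1) show ?thesis
    unfolding s_def by (meson order.strict_trans1)
qed

lemma club_tail:
  fixes \<delta> :: "'a::wellorder"
  assumes "uncountable_cf \<delta>" and "b < \<delta>"
  shows "club {\<gamma>. b < \<gamma> \<and> \<gamma> < \<delta>} \<delta>"
  unfolding club_def
proof (intro conjI allI impI)
  obtain x where x: "b < x" "x < \<delta>" using uncountable_cf_between[OF assms] by blast
  fix c assume "c < \<delta>"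
  with x show "\<exists>y\<in>{\<gamma>. b < \<gamma> \<and> \<gamma> < \<delta>}. c \<le> y"
    by (intro bexI[of _ "max c x"]) (auto simp: max_def)
next
  fix g assume "g < \<delta>" and g: "is_limit g \<and> (\<forall>c<g. \<exists>y\<in>{\<gamma>. b < \<gamma> \<and> \<gamma> < \<delta>}. c < y \<and> y < g)"
  then obtain y where "y < g" unfolding is_limit_def by blast
  with g \<open>g < \<delta>\<close> show "g \<in> {\<gamma>. b < \<gamma> \<and> \<gamma> < \<delta>}" by auto
qed (auto simp: below_def)

lemma club_limit_points:
  fixes \<delta> :: "'a::wellorder" and S :: "'a set"
  assumes u: "uncountable_cf \<delta>" and unbounded: "\<forall>b<\<delta>. \<exists>x\<in>S. b < x \<and> x < \<delta>"
  shows "club {\<gamma>. \<gamma> < \<delta> \<and> is_limit \<gamma> \<and> (\<forall>b<\<gamma>. \<exists>c\<in>S. b < c \<and> c < \<gamma>)} \<delta>"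
  unfolding club_def
proof (intro conjI allI impI)
  fix c assume c: "c < \<delta>"
  define F where "F b = (SOME x. x \<in> S \<and> b < x \<and> x < \<delta>)" for b
  have F: "F b \<in> S \<and> b < F b \<and> F b < \<delta>" if "b < \<delta>" for b
    unfolding F_def by (rule someI_ex) (use unbounded that in blast)
  obtain \<gamma> where \<gamma>: "\<gamma> < \<delta>" "c < \<gamma>" "\<forall>b<\<gamma>. \<exists>n. b < (F^^n) c" "\<forall>n. (F^^n) c < \<gamma>"
    using iterate_sup_below[OF u _ c, of F] F by blast
  have S_cofinal: "\<exists>x\<in>S. b < x \<and> x < \<gamma>" if b: "b < \<gamma>" for b
  proof -
    obtain n where n: "b < (F^^n) c" using \<gamma>(3) b by blast
    have "(F^^n) c < \<delta>" using \<gamma>(1,4) by (meson order.strict_trans)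
    then have "(F^^Suc n) c \<in> S" "(F^^n) c < (F^^Suc n) c" using F by auto
    with n \<gamma>(4) show ?thesis by (meson order.strict_trans)
  qed
  then have "is_limit \<gamma>" using \<gamma>(2) unfolding is_limit_def by blast
  with S_cofinal \<gamma>(1,2)
  show "\<exists>y\<in>{\<gamma>. \<gamma> < \<delta> \<and> is_limit \<gamma> \<and> (\<forall>b<\<gamma>. \<exists>c\<in>S. b < c \<and> c < \<gamma>)}. c \<le> y"
    by (intro bexI[of _ \<gamma>]) auto
next
  fix g assume "g < \<delta>"
    and g: "is_limit g \<and> (\<forall>b<g. \<exists>y\<in>{\<gamma>. \<gamma> < \<delta> \<and> is_limit \<gamma> \<and> (\<forall>b<\<gamma>. \<exists>c\<in>S. b < c \<and> c < \<gamma>)}.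
             b < y \<and> y < g)"
  have "\<exists>x\<in>S. b < x \<and> x < g" if b: "b < g" for b
  proof -
    obtain y where "b < y" "y < g" "\<forall>b<y. \<exists>c\<in>S. b < c \<and> c < y" using g b by blast
    then show ?thesis by (meson order.strict_trans)
  qed
  with g \<open>g < \<delta>\<close> show "g \<in> {\<gamma>. \<gamma> < \<delta> \<and> is_limit \<gamma> \<and> (\<forall>b<\<gamma>. \<exists>c\<in>S. b < c \<and> c < \<gamma>)}"
    by auto
qed (auto simp: below_def)

definition isolated_points :: "'a::wellorder set \<Rightarrow> 'a set" where
  "isolated_points A = {a \<in> A. \<exists>e<a. \<forall>x\<in>A. x < a \<longrightarrow> x \<le> e}"

lemma nowhere_stationary_isolated_points:
  fixes A :: "'a::wellorder set"
  shows "nowhere_stationary l (isolated_points A)"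
  unfolding nowhere_stationary_def
proof (intro allI impI)
  let ?S = "isolated_points A"
  fix \<delta> :: 'a assume "\<delta> \<le> l \<and> uncountable_cf \<delta>"
  then have u: "uncountable_cf \<delta>" by simp
  have "\<exists>D. club D \<delta> \<and> ?S \<inter> D = {}"
  proof (cases "\<exists>b<\<delta>. \<forall>x\<in>?S. x < \<delta> \<longrightarrow> x \<le> b")
    case True
    then obtain b where "b < \<delta>" "\<forall>x\<in>?S. x < \<delta> \<longrightarrow> x \<le> b" by blast
    then show ?thesis using club_tail[OF u] by (intro exI[of _ "{\<gamma>. b < \<gamma> \<and> \<gamma> < \<delta>}"]) force
  next
    case False
    then have "\<forall>b<\<delta>. \<exists>x\<in>?S. b < x \<and> x < \<delta>" by (auto simp: not_le)
    moreover have "a \<notin> ?S" if "\<forall>b<a. \<exists>c\<in>?S. b < c \<and> c < a" for a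
      using that unfolding isolated_points_def by (force simp: not_le)
    ultimately show ?thesis using club_limit_points[OF u] by blast
  qed
  then show "\<not> stationary_in (?S \<inter> below \<delta>) \<delta>" unfolding stationary_in_def by blast
qed

lemma nowhere_stationary_misses_club:
  fixes k :: "'a::wellorder"
  assumes "nowhere_stationary k T" and "uncountable_cf k"
  shows "\<exists>D. club D k \<and> T \<inter> D = {}"
proof -
  have "\<not> stationary_in (T \<inter> below k) k"
    using assms unfolding nowhere_stationary_def by blast
  then obtain D where "club D k" "T \<inter> below k \<inter> D = {}" unfolding stationary_in_def by blast
  moreover have "D \<subseteq> below k" using \<open>club D k\<close> unfolding club_def by blast
  ultimately show ?thesis by blast
qed

lemma isolated_point_above:
  fixes A :: "'a::wellorder set"
  assumes "a \<in> A" and "b < a"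
  shows "\<exists>a'\<in>isolated_points A. b < a'"
proof -
  let ?a = "LEAST a. a \<in> A \<and> b < a"
  have "?a \<in> A \<and> b < ?a" by (rule LeastI[of _ a]) (use assms in blast)
  moreover have "\<forall>x\<in>A. x < ?a \<longrightarrow> x \<le> b" using not_less_Least by (metis not_le)
  ultimately show ?thesis unfolding isolated_points_def by blast
qed

lemma regular_bounded_image:
  fixes k x :: "'a::wellorder" and g :: "'a \<Rightarrow> 'a"
  assumes card: "is_cardinal k" and reg: "regular k" and u: "uncountable_cf k"
    and "x < k" and g: "\<forall>i<k. g i < k"
  shows "\<exists>y. x < y \<and> y < k \<and> (\<forall>i\<le>x. g i < y)"
proof -
  obtain y where y: "x < y" "y < k" using uncountable_cf_between[OF u \<open>x < k\<close>] by blast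
  let ?G = "g ` {i. i \<le> x}"
  have "\<not> cofinal_in ?G k"
  proof
    assume "cofinal_in ?G k"
    then have iso: "(card_of ?G, card_of (below k)) \<in> ordIso"
      using reg unfolding regular_def by blast
    have "(card_of ?G, card_of {i. i \<le> x}) \<in> ordLeq" by (rule card_of_image)
    moreover have "(card_of {i. i \<le> x}, card_of (below y)) \<in> ordLeq"
      by (rule card_of_mono1) (use y in \<open>auto simp: below_def\<close>)
    moreover have "(card_of (below y), card_of (below k)) \<in> ordLess"
      using card y unfolding is_cardinal_def by blast
    ultimately have "(card_of ?G, card_of (below k)) \<in> ordLess"
      using ordLeq_ordLess_trans ordLeq_transitive by blast
    with iso show False using not_ordLess_ordIso by blast
  qed
  moreover have "?G \<subseteq> below k" using g \<open>x < k\<close> by (auto simp: below_def)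
  ultimately obtain c where "c < k" "\<forall>z\<in>?G. z < c"
    unfolding cofinal_in_def by (meson not_le)
  then have "c < k" "\<forall>i\<le>x. g i < c" by auto
  with y show ?thesis by (intro exI[of _ "max c y"]) (auto simp: max_def less_le_trans)
qed

lemma club_closure_points:
  fixes k b :: "'a::wellorder" and g :: "'a \<Rightarrow> 'a"
  assumes card: "is_cardinal k" and reg: "regular k" and u: "uncountable_cf k"
    and "b < k" and g: "\<forall>i<k. g i < k"
  shows "club {s. s < k \<and> b < s \<and> (\<forall>i<s. g i < s)} k"
  unfolding club_def
proof (intro conjI allI impI)
  fix c assume "c < k"
  define F where "F x = (SOME y. x < y \<and> y < k \<and> (\<forall>i\<le>x. g i < y))" for x
  have F: "x < F x \<and> F x < k \<and> (\<forall>i\<le>x. g i < F x)" if "x < k" for x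
    unfolding F_def by (rule someI_ex) (rule regular_bounded_image[OF card reg u that g])
  have "max c b < k" using \<open>b < k\<close> \<open>c < k\<close> by (simp add: max_def)
  then obtain \<gamma> where \<gamma>: "\<gamma> < k" "max c b < \<gamma>" "\<forall>i<\<gamma>. \<exists>n. i < (F^^n) (max c b)"
      "\<forall>n. (F^^n) (max c b) < \<gamma>"
    using iterate_sup_below[OF u, of F] F by blast
  have "g i < \<gamma>" if i: "i < \<gamma>" for i
  proof -
    obtain n where n: "i < (F^^n) (max c b)" using \<gamma>(3) i by blast
    have "(F^^n) (max c b) < k" using \<gamma>(1,4) by (meson order.strict_trans)
    then have "g i < (F^^Suc n) (max c b)" using F n by simp
    then show ?thesis using \<gamma>(4) by (meson order.strict_trans)
  qed
  with \<gamma>(1,2) show "\<exists>y\<in>{s. s < k \<and> b < s \<and> (\<forall>i<s. g i < s)}. c \<le> y"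
    by (intro bexI[of _ \<gamma>]) auto
next
  fix \<gamma> assume "\<gamma> < k"
    and \<gamma>: "is_limit \<gamma> \<and> (\<forall>c<\<gamma>. \<exists>s\<in>{s. s < k \<and> b < s \<and> (\<forall>i<s. g i < s)}. c < s \<and> s < \<gamma>)"
  obtain y where "y < \<gamma>" using \<gamma> unfolding is_limit_def by blast
  then obtain s where "b < s" "s < \<gamma>" using \<gamma> by blast
  then have "b < \<gamma>" by simp
  moreover have "g i < \<gamma>" if i: "i < \<gamma>" for i
  proof -
    obtain s where "i < s" "s < \<gamma>" "\<forall>i<s. g i < s" using \<gamma> i by blast
    then show ?thesis by (meson order.strict_trans)
  qed
  ultimately show "\<gamma> \<in> {s. s < k \<and> b < s \<and> (\<forall>i<s. g i < s)}" using \<open>\<gamma> < k\<close> by auto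
qed (auto simp: below_def)

lemma stationary_closure_points_above:
  fixes k b :: "'a::wellorder" and g :: "'a \<Rightarrow> 'a"
  assumes "strongly_inaccessible k" and "stationary_in P k"
    and "b < k" and "\<forall>i<k. g i < k"
  shows "\<exists>a\<in>P. b < a \<and> (\<forall>i<a. g i < a)"
  using assms(2) club_closure_points[OF strongly_inaccessibleD[OF assms(1)] assms(3,4)]
  unfolding stationary_in_def by blast

definition next_above :: "'a::wellorder set \<Rightarrow> 'a \<Rightarrow> 'a" where
  "next_above D i = (LEAST x. x \<in> D \<and> i < x)"

lemma next_above_club:
  fixes k i :: "'a::wellorder"
  assumes "club D k" and "uncountable_cf k" and "i < k"
  shows "next_above D i \<in> D" "i < next_above D i" "next_above D i < k"
proof -
  obtain i' where "i < i'" "i' < k" using uncountable_cf_between[OF assms(2,3)] by blast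
  then obtain c where "c \<in> D" "i < c"
    using assms(1) unfolding club_def by (meson less_le_trans)
  then have "next_above D i \<in> D \<and> i < next_above D i"
    unfolding next_above_def by (rule LeastI[of _ c, OF conjI])
  then show "next_above D i \<in> D" "i < next_above D i" "next_above D i < k"
    using assms(1) unfolding club_def below_def by auto
qed

lemma next_above_jumps_over:
  fixes k a :: "'a::wellorder"
  assumes D: "club D k" and "uncountable_cf k" and "a < k" and "is_limit a" and "a \<notin> D"
  shows "\<exists>y<a. \<forall>i. y \<le> i \<and> i < a \<longrightarrow> a \<le> next_above D i"
proof -
  obtain y where "y < a" and gap: "\<forall>c\<in>D. \<not> (y < c \<and> c < a)"
    using assms unfolding club_def by blast
  have "a \<le> next_above D i" if "y \<le> i" "i < a" for i
    using gap next_above_club[OF D assms(2), of i] that \<open>a < k\<close>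
    by (meson le_less_trans not_le order.strict_trans)
  with \<open>y < a\<close> show ?thesis by blast
qed

definition next_above_fun :: "'a::wellorder \<Rightarrow> 'a set \<Rightarrow> 'a \<Rightarrow> 'a" where
  "next_above_fun k D = restrict (next_above D) (below k)"

lemma next_above_fun_kfuns:
  fixes k :: "'a::wellorder"
  assumes "club D k" and "uncountable_cf k"
  shows "next_above_fun k D \<in> kfuns k"
  using next_above_club(3)[OF assms]
  unfolding kfuns_def next_above_fun_def by (auto simp: below_def)

lemma next_above_funs_unbounded:
  fixes k :: "'a::wellorder"
  assumes k: "strongly_inaccessible k" and "stationary_in (S_pr k) k"
    and C: "cofinal_family k C"
    and D: "\<And>T. T \<in> C \<Longrightarrow> club (D T) k \<and> T \<inter> D T = {}"
    and g: "g \<in> kfuns k"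
  shows "\<exists>T\<in>C. \<not> le_star k (next_above_fun k (D T)) g"
proof (rule ccontr)
  assume "\<not> ?thesis"
  then have dominated: "\<forall>T\<in>C. le_star k (next_above_fun k (D T)) g" by blast
  have g_below: "\<forall>i<k. g i < k" using g unfolding kfuns_def below_def by auto
  define A where "A = {s \<in> S_pr k. \<forall>i<s. g i < s}"
  have "isolated_points A \<subseteq> S_pr k" unfolding isolated_points_def A_def by blast
  then have "isolated_points A \<in> nst_pr k"
    unfolding nst_pr_def using nowhere_stationary_isolated_points by blast
  then obtain T b0 where T: "T \<in> C" "b0 < k" "isolated_points A - T \<subseteq> below b0"
    using C unfolding cofinal_family_def subseteq_star_def by blast
  obtain b1 where "b1 < k" and b1: "\<forall>i. b1 \<le> i \<and> i < k \<longrightarrow> next_above_fun k (D T) i \<le> g i"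
    using dominated T(1) unfolding le_star_def by blast
  have "max b0 b1 < k" using T(2) \<open>b1 < k\<close> by simp
  then obtain a0 where "a0 \<in> A" "max b0 b1 < a0"
    using stationary_closure_points_above[OF k assms(2) _ g_below] unfolding A_def by blast
  then obtain a where a: "a \<in> isolated_points A" "max b0 b1 < a"
    using isolated_point_above by blast
  then have "a \<in> T" using T(3) unfolding below_def by auto
  then have "a \<notin> D T" using D[OF T(1)] by blast
  have "a \<in> S_pr k" "\<forall>i<a. g i < a" using a(1) unfolding isolated_points_def A_def by auto
  then have "a < k" "strongly_inaccessible a" unfolding S_pr_def S_inc_def by auto
  then have "is_limit a" using strongly_inaccessible_is_limit a(2) by blast
  obtain y where "y < a" and jump: "\<forall>i. y \<le> i \<and> i < a \<longrightarrow> a \<le> next_above (D T) i"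
    using next_above_jumps_over[OF conjunct1[OF D[OF T(1)]] strongly_inaccessibleD(3)[OF k]
        \<open>a < k\<close> \<open>is_limit a\<close> \<open>a \<notin> D T\<close>] by blast
  define i where "i = max y b1"
  have "i < a" "b1 \<le> i" using \<open>y < a\<close> a(2) by (auto simp: i_def)
  with \<open>a < k\<close> have "i < k" by simp
  have "a \<le> next_above (D T) i" using jump \<open>i < a\<close> by (simp add: i_def)
  also have "\<dots> = next_above_fun k (D T) i" using \<open>i < k\<close> by (simp add: next_above_fun_def below_def)
  also have "\<dots> \<le> g i" using b1 \<open>b1 \<le> i\<close> \<open>i < k\<close> by blast
  also have "\<dots> < a" using \<open>\<forall>i<a. g i < a\<close> \<open>i < a\<close> by blast
  finally show False by simp
qed

theorem theorem5p9:
  fixes kappa :: "'a::wellorder"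
  assumes "strongly_inaccessible kappa"
      and "stationary_in (S_pr kappa) kappa"
  shows "\<forall>C. cofinal_family kappa C \<longrightarrow>
           (\<exists>B. unbounded_family kappa B \<and> (card_of B, card_of C) \<in> ordLeq)"
proof (intro allI impI)
  fix C assume C: "cofinal_family kappa C"
  note uncountable_cf = strongly_inaccessibleD(3)[OF assms(1)]
  have "\<forall>T\<in>C. \<exists>D. club D kappa \<and> T \<inter> D = {}"
    using C nowhere_stationary_misses_club[OF _ uncountable_cf]
    unfolding cofinal_family_def nst_pr_def by blast
  then obtain D where D: "\<forall>T\<in>C. club (D T) kappa \<and> T \<inter> D T = {}"
    by (auto dest: bchoice)
  let ?B = "(\<lambda>T. next_above_fun kappa (D T)) ` C"
  have "?B \<subseteq> kfuns kappa" using next_above_fun_kfuns[OF _ uncountable_cf] D by blast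
  moreover have "\<not> (\<exists>g\<in>kfuns kappa. \<forall>f\<in>?B. le_star kappa f g)"
    using next_above_funs_unbounded[OF assms C D[rule_format]] by blast
  ultimately have "unbounded_family kappa ?B" unfolding unbounded_family_def by blast
  moreover have "(card_of ?B, card_of C) \<in> ordLeq" by (rule card_of_image)
  ultimately show "\<exists>B. unbounded_family kappa B \<and> (card_of B, card_of C) \<in> ordLeq" by blast
qed

end
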